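(* Let $G=(V,E)$ be a directed graph with $|V|=n$ vertices, and let $W\subseteq V$ be a set of vertices whose minimal dominating set has size $k$. Then $W$ contains an independent set $U$ of size at least $\tfrac{1}{50}k/\ln n$ with the property that every vertex $v\in V$ dominates at most $\ln n$ vertices of $U$, i.e. $|N^{\mathrm{out}}(v)\cap U|\le\ln n$ for all $v\in V$.
   Context: For a directed graph $G=(V,E)$ (self-loops allowed), $N^{\mathrm{out}}(v)=\{w:(v,w)\in E\}$; a vertex $v$ dominates $w$ if $w\in N^{\mathrm{out}}(v)$. A dominating set of $W\subseteq V$ is a set $D\subseteq V$ such that every $w\in W$ is dominated by some $d\in D$; "the minimal dominating set of $W$ has size $k$" means the smallest such $D$ has $|D|=k$. An independent set is a set $S$ such that $(u,v)\notin E$ for all distinct $u,v\in S$. *)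

theory Defs
  imports Complex_Main
begin

text \<open>Directed graph: vertex set V, edge set E \<subseteq> V \<times> V (self-loops allowed).\<close>

definition out_nbrs :: "('a \<times> 'a) set \<Rightarrow> 'a \<Rightarrow> 'a set" where
  "out_nbrs E v = {w. (v, w) \<in> E}"

definition dominating_set :: "'a set \<Rightarrow> ('a \<times> 'a) set \<Rightarrow> 'a set \<Rightarrow> 'a set \<Rightarrow> bool" where
  "dominating_set V E W D \<longleftrightarrow> D \<subseteq> V \<and> (\<forall>w\<in>W. \<exists>d\<in>D. w \<in> out_nbrs E d)"

definition min_dom_size :: "'a set \<Rightarrow> ('a \<times> 'a) set \<Rightarrow> 'a set \<Rightarrow> nat \<Rightarrow> bool" where
  "min_dom_size V E W k \<longleftrightarrow>
     (\<exists>D. dominating_set V E W D \<and> card D = k) \<and>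
     (\<forall>D. dominating_set V E W D \<longrightarrow> k \<le> card D)"

definition independent_set :: "('a \<times> 'a) set \<Rightarrow> 'a set \<Rightarrow> bool" where
  "independent_set E S \<longleftrightarrow> (\<forall>u\<in>S. \<forall>v\<in>S. u \<noteq> v \<longrightarrow> (u, v) \<notin> E)"

end

theory Submission
  imports Defs
begin

(* Let L = ln n and \<rho> = 6 k / (7 L). Grow U \<subseteq> W greedily, keeping the potential
   \<Phi>(U) = \<Sum>v. exp (2 |N(v) \<inter> U|) small: add a vertex w whose weighted in-degree
   \<Sum>(v,w)\<in>E. exp (2 |N(v) \<inter> U|) is at most \<Phi>(U) / \<rho>, which multiplies \<Phi> by at most
   exp ((e^2 - 1) / \<rho>). Stop after k / 10 steps, or earlier when no such w exists. In the
   latter case the weights exp (2 |N(v) \<inter> U|) form a fractional dominating set of W - U of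
   value \<rho>, and greedy rounding turns it into a dominating set of size at most 1 + \<rho> L;
   adding |U| vertices dominating U gives k \<le> |U| + 1 + 6 k / 7, so U is large either way.
   Since \<Phi>(U) \<le> n exp L = n^2, every vertex has at most L out-neighbours in U, and a greedy
   independent subset of U loses a factor at most 2 L + 1. *)

lemma of_nat_card_filter_eq_sum:
  "finite A \<Longrightarrow> of_nat (card {x\<in>A. P x}) = (\<Sum>x\<in>A. if P x then 1 else 0)"
  by (simp add: sum.inter_filter[symmetric])

definition in_weight :: "'a set \<Rightarrow> ('a \<times> 'a) set \<Rightarrow> ('a \<Rightarrow> real) \<Rightarrow> 'a \<Rightarrow> real" where
  "in_weight V E q w = (\<Sum>v\<in>V. if (v, w) \<in> E then q v else 0)"

lemma in_weight_le_sum: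
  assumes "\<And>v. v \<in> V \<Longrightarrow> q v \<ge> 0"
  shows "in_weight V E q w \<le> sum q V"
  unfolding in_weight_def by (rule sum_mono) (use assms in auto)

lemma sum_weighted_card_out_nbrs:
  assumes "finite P"
  shows "(\<Sum>v\<in>V. q v * real (card (out_nbrs E v \<inter> P))) = (\<Sum>w\<in>P. in_weight V E q w)"
proof -
  have "real (card (out_nbrs E v \<inter> P)) = (\<Sum>w\<in>P. if (v, w) \<in> E then 1 else 0)" for v
  proof -
    have "out_nbrs E v \<inter> P = {w\<in>P. (v, w) \<in> E}" by (auto simp: out_nbrs_def)
    then show ?thesis using of_nat_card_filter_eq_sum[OF assms] by simp
  qed
  then have "(\<Sum>v\<in>V. q v * real (card (out_nbrs E v \<inter> P)))
      = (\<Sum>v\<in>V. \<Sum>w\<in>P. if (v, w) \<in> E then q v else 0)"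
    by (simp add: sum_distrib_left if_distrib cong: if_cong)
  also have "\<dots> = (\<Sum>w\<in>P. in_weight V E q w)"
    unfolding in_weight_def by (rule sum.swap)
  finally show ?thesis .
qed

lemma exists_out_nbrs_large_fraction:
  assumes "finite P" "P \<noteq> {}" "\<beta> \<ge> 0"
    and q_nonneg: "\<And>v. v \<in> V \<Longrightarrow> q v \<ge> 0"
    and heavy: "\<And>w. w \<in> P \<Longrightarrow> in_weight V E q w > \<beta>"
  shows "\<exists>v\<in>V. \<beta> * real (card P) < real (card (out_nbrs E v \<inter> P)) * sum q V"
proof (rule ccontr)
  assume "\<not> ?thesis"
  then have small: "real (card (out_nbrs E v \<inter> P)) * sum q V \<le> \<beta> * real (card P)"
    if "v \<in> V" for v
    using that by force
  obtain w where "w \<in> P" using assms(2) by blast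
  have "\<beta> < sum q V"
    by (rule less_le_trans[OF heavy[OF \<open>w \<in> P\<close>] in_weight_le_sum]) (rule q_nonneg)
  then have Q_pos: "sum q V > 0" using \<open>\<beta> \<ge> 0\<close> by linarith
  have "\<beta> * real (card P) = (\<Sum>w\<in>P. \<beta>)" by simp
  also have "\<dots> < (\<Sum>w\<in>P. in_weight V E q w)"
    using assms(1,2) heavy by (intro sum_strict_mono) auto
  also have "\<dots> = (\<Sum>v\<in>V. q v * real (card (out_nbrs E v \<inter> P)))"
    by (rule sum_weighted_card_out_nbrs[OF assms(1), symmetric])
  finally have lower: "\<beta> * real (card P) < (\<Sum>v\<in>V. q v * real (card (out_nbrs E v \<inter> P)))" .
  have "(\<Sum>v\<in>V. q v * real (card (out_nbrs E v \<inter> P))) * sum q V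
      = (\<Sum>v\<in>V. q v * (real (card (out_nbrs E v \<inter> P)) * sum q V))"
    by (simp add: sum_distrib_right mult.assoc)
  also have "\<dots> \<le> (\<Sum>v\<in>V. q v * (\<beta> * real (card P)))"
    using small q_nonneg by (intro sum_mono mult_left_mono) auto
  also have "\<dots> = \<beta> * real (card P) * sum q V"
    by (simp add: sum_distrib_right mult.commute)
  finally have "(\<Sum>v\<in>V. q v * real (card (out_nbrs E v \<inter> P))) \<le> \<beta> * real (card P)"
    using Q_pos by (rule mult_right_le_imp_le)
  with lower show False by linarith
qed

text \<open>Each greedy step removes at least a \<open>\<beta> / sum q V\<close> fraction of the targets, which lowers
  \<open>ln |P|\<close> by at least \<open>\<beta> / sum q V\<close> because \<open>ln (1 - x) \<le> -x\<close>.\<close>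

lemma greedy_dominating_set:
  assumes finV: "finite V" and q_nonneg: "\<And>v. v \<in> V \<Longrightarrow> q v \<ge> 0" and "\<beta> > 0"
    and "finite P" "P \<noteq> {}" "\<And>w. w \<in> P \<Longrightarrow> in_weight V E q w > \<beta>"
  shows "\<exists>D. dominating_set V E P D \<and> real (card D) \<le> 1 + sum q V / \<beta> * ln (real (card P))"
  using assms(4-6)
proof (induction "card P" arbitrary: P rule: less_induct)
  case less
  define Q where "Q = sum q V"
  obtain v where v: "v \<in> V" and frac: "\<beta> * real (card P) < real (card (out_nbrs E v \<inter> P)) * Q"
    using exists_out_nbrs_large_fraction[of P \<beta> V q E] less.prems \<open>\<beta> > 0\<close> q_nonneg
    unfolding Q_def by auto
  have P_pos: "real (card P) > 0" using less.prems by (simp add: card_gt_0_iff)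
  have "0 < real (card (out_nbrs E v \<inter> P)) * Q"
    using frac P_pos \<open>\<beta> > 0\<close> by (meson less_trans mult_pos_pos)
  then have Q_pos: "Q > 0" by (simp add: zero_less_mult_iff)
  define P' where "P' = P - out_nbrs E v"
  have card_P': "real (card P') = real (card P) - real (card (out_nbrs E v \<inter> P))"
  proof -
    have "card P' = card P - card (out_nbrs E v \<inter> P)"
      unfolding P'_def using less.prems(1) by (simp add: card_Diff_subset_Int Int_commute)
    moreover have "card (out_nbrs E v \<inter> P) \<le> card P" using less.prems(1) by (simp add: card_mono)
    ultimately show ?thesis by simp
  qed
  show ?case
  proof (cases "P' = {}")
    case True
    then have "dominating_set V E P {v}"
      using v by (auto simp: P'_def dominating_set_def)
    moreover have "0 \<le> Q / \<beta> * ln (real (card P))"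
      using P_pos Q_pos \<open>\<beta> > 0\<close> by simp
    ultimately show ?thesis unfolding Q_def by (intro exI[of _ "{v}"]) auto
  next
    case False
    have P'_pos: "real (card P') > 0"
      using False less.prems(1) by (simp add: P'_def card_gt_0_iff)
    have "0 < real (card (out_nbrs E v \<inter> P))"
      using frac P_pos Q_pos \<open>\<beta> > 0\<close> by (meson less_trans mult_pos_pos zero_less_mult_pos2)
    then have "card P' < card P" using card_P' by linarith
    moreover have "\<And>w. w \<in> P' \<Longrightarrow> in_weight V E q w > \<beta>" using less.prems by (auto simp: P'_def)
    ultimately obtain D' where D': "dominating_set V E P' D'"
      and card_D': "real (card D') \<le> 1 + Q / \<beta> * ln (real (card P'))"
      using less.hyps[of P'] less.prems(1) False unfolding Q_def P'_def by blast
    have "ln (real (card P')) - ln (real (card P)) \<le> (real (card P') - real (card P)) / real (card P)"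
      using P'_pos P_pos by (rule ln_diff_le)
    also have "\<dots> \<le> - \<beta> / Q"
    proof -
      have "Q * (real (card P') - real (card P)) = - (real (card (out_nbrs E v \<inter> P)) * Q)"
        unfolding card_P' by (simp add: algebra_simps)
      then have "Q * (real (card P') - real (card P)) \<le> - \<beta> * real (card P)"
        using frac by linarith
      then show ?thesis using Q_pos P_pos by (simp add: field_simps)
    qed
    finally have "ln (real (card P')) \<le> ln (real (card P)) - \<beta> / Q" by simp
    then have "Q / \<beta> * ln (real (card P')) \<le> Q / \<beta> * (ln (real (card P)) - \<beta> / Q)"
      using Q_pos \<open>\<beta> > 0\<close> by (intro mult_left_mono) auto
    also have "\<dots> = Q / \<beta> * ln (real (card P)) - 1"
      using Q_pos \<open>\<beta> > 0\<close> by (simp add: right_diff_distrib)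
    finally have decrease: "Q / \<beta> * ln (real (card P')) \<le> Q / \<beta> * ln (real (card P)) - 1" .
    have "card (insert v D') \<le> card D' + 1"
      by (cases "finite D'") (auto simp: card_insert_if)
    then have "real (card (insert v D')) \<le> 1 + Q / \<beta> * ln (real (card P))"
      using card_D' decrease by linarith
    moreover have "dominating_set V E P (insert v D')"
      using D' v by (auto simp: dominating_set_def P'_def)
    ultimately show ?thesis unfolding Q_def by blast
  qed
qed

lemma sum_card_in_nbrs_eq_sum_card_out_nbrs:
  assumes "finite U"
  shows "(\<Sum>u\<in>U. real (card {x\<in>U. x \<noteq> u \<and> (x, u) \<in> E}))
    = (\<Sum>u\<in>U. real (card {x\<in>U. x \<noteq> u \<and> (u, x) \<in> E}))"
proof -
  have "(\<Sum>u\<in>U. real (card {x\<in>U. x \<noteq> u \<and> (x, u) \<in> E}))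
      = (\<Sum>u\<in>U. \<Sum>x\<in>U. if x \<noteq> u \<and> (x, u) \<in> E then 1 else 0)"
    by (simp only: of_nat_card_filter_eq_sum[OF assms])
  also have "\<dots> = (\<Sum>x\<in>U. \<Sum>u\<in>U. if x \<noteq> u \<and> (x, u) \<in> E then 1 else 0)"
    by (rule sum.swap)
  also have "\<dots> = (\<Sum>x\<in>U. real (card {u\<in>U. x \<noteq> u \<and> (x, u) \<in> E}))"
    by (simp only: of_nat_card_filter_eq_sum[OF assms])
  also have "\<dots> = (\<Sum>x\<in>U. real (card {u\<in>U. u \<noteq> x \<and> (x, u) \<in> E}))"
    by (intro sum.cong refl arg_cong[where f = "\<lambda>A. real (card A)"]) blast
  finally show ?thesis .
qed

lemma exists_vertex_few_nbrs:
  assumes "finite U" "U \<noteq> {}"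
    and out_deg: "\<And>u. u \<in> U \<Longrightarrow> real (card {x\<in>U. x \<noteq> u \<and> (u, x) \<in> E}) \<le> t"
  shows "\<exists>u\<in>U. real (card {x\<in>U. x \<noteq> u \<and> ((u, x) \<in> E \<or> (x, u) \<in> E)}) \<le> 2 * t"
proof (rule ccontr)
  assume "\<not> ?thesis"
  then have "(\<Sum>u\<in>U. 2 * t) < (\<Sum>u\<in>U. real (card {x\<in>U. x \<noteq> u \<and> ((u, x) \<in> E \<or> (x, u) \<in> E)}))"
    using assms(1,2) by (intro sum_strict_mono) (auto simp: not_le)
  also have "\<dots> \<le> (\<Sum>u\<in>U. real (card {x\<in>U. x \<noteq> u \<and> (u, x) \<in> E}) + real (card {x\<in>U. x \<noteq> u \<and> (x, u) \<in> E}))"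
  proof (rule sum_mono)
    fix u
    have "{x\<in>U. x \<noteq> u \<and> ((u, x) \<in> E \<or> (x, u) \<in> E)}
        = {x\<in>U. x \<noteq> u \<and> (u, x) \<in> E} \<union> {x\<in>U. x \<noteq> u \<and> (x, u) \<in> E}" by blast
    then have "card {x\<in>U. x \<noteq> u \<and> ((u, x) \<in> E \<or> (x, u) \<in> E)}
        \<le> card {x\<in>U. x \<noteq> u \<and> (u, x) \<in> E} + card {x\<in>U. x \<noteq> u \<and> (x, u) \<in> E}"
      by (simp only: card_Un_le)
    then show "real (card {x\<in>U. x \<noteq> u \<and> ((u, x) \<in> E \<or> (x, u) \<in> E)})
        \<le> real (card {x\<in>U. x \<noteq> u \<and> (u, x) \<in> E}) + real (card {x\<in>U. x \<noteq> u \<and> (x, u) \<in> E})"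
      by linarith
  qed
  also have "\<dots> = 2 * (\<Sum>u\<in>U. real (card {x\<in>U. x \<noteq> u \<and> (u, x) \<in> E}))"
    unfolding sum.distrib sum_card_in_nbrs_eq_sum_card_out_nbrs[OF assms(1)] by simp
  also have "\<dots> \<le> 2 * (\<Sum>u\<in>U. t)"
    using out_deg by (intro mult_left_mono sum_mono) auto
  also have "\<dots> = (\<Sum>u\<in>U. 2 * t)"
    by (rule sum_distrib_left)
  finally show False by simp
qed

lemma independent_subset_of_bounded_out_degree:
  assumes "finite U" "\<And>u. u \<in> U \<Longrightarrow> real (card {x\<in>U. x \<noteq> u \<and> (u, x) \<in> E}) \<le> t"
  shows "\<exists>I\<subseteq>U. independent_set E I \<and> real (card U) \<le> (2 * t + 1) * real (card I)"
  using assms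
proof (induction "card U" arbitrary: U rule: less_induct)
  case less
  show ?case
  proof (cases "U = {}")
    case True
    then show ?thesis by (auto simp: independent_set_def)
  next
    case False
    define nbrs where "nbrs u = {x\<in>U. x \<noteq> u \<and> ((u, x) \<in> E \<or> (x, u) \<in> E)}" for u
    obtain u where u: "u \<in> U" and few: "real (card (nbrs u)) \<le> 2 * t"
      using exists_vertex_few_nbrs[OF less.prems(1) False less.prems(2)] unfolding nbrs_def by blast
    define U' where "U' = U - insert u (nbrs u)"
    have closed_nbhd: "insert u (nbrs u) \<subseteq> U" "finite (nbrs u)"
      using u less.prems(1) by (auto simp: nbrs_def)
    have card_U: "card U = card U' + card (insert u (nbrs u))"
      using card_Diff_subset[of "insert u (nbrs u)" U] card_mono[OF less.prems(1) closed_nbhd(1)]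
        closed_nbhd by (simp add: U'_def)
    have "card U' < card U" "finite U'"
      using card_U closed_nbhd(2) less.prems(1) by (simp_all add: U'_def card_gt_0_iff)
    moreover have "\<And>x. x \<in> U' \<Longrightarrow> real (card {y\<in>U'. y \<noteq> x \<and> (x, y) \<in> E}) \<le> t"
    proof -
      fix x assume "x \<in> U'"
      have "card {y\<in>U'. y \<noteq> x \<and> (x, y) \<in> E} \<le> card {y\<in>U. y \<noteq> x \<and> (x, y) \<in> E}"
        using less.prems(1) by (intro card_mono) (auto simp: U'_def)
      then show "real (card {y\<in>U'. y \<noteq> x \<and> (x, y) \<in> E}) \<le> t"
        using less.prems(2)[of x] \<open>x \<in> U'\<close> by (simp add: U'_def)
    qed
    ultimately obtain I where I: "I \<subseteq> U'" "independent_set E I"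
      and card_I: "real (card U') \<le> (2 * t + 1) * real (card I)"
      using less.hyps by blast
    have "u \<notin> I" "finite I"
      using I(1) less.prems(1) by (auto simp: U'_def intro: finite_subset)
    have "independent_set E (insert u I)"
      using I u by (auto simp: independent_set_def U'_def nbrs_def)
    moreover have "real (card U) \<le> (2 * t + 1) * real (card (insert u I))"
    proof -
      have "real (card (insert u (nbrs u))) \<le> 2 * t + 1"
        using few closed_nbhd(2) by (simp add: card_insert_if)
      then show ?thesis
        using card_U card_I \<open>u \<notin> I\<close> \<open>finite I\<close> by (simp add: algebra_simps)
    qed
    ultimately show ?thesis using I(1) u by (intro exI[of _ "insert u I"]) (auto simp: U'_def)
  qed
qed

definition exp_load :: "('a \<times> 'a) set \<Rightarrow> 'a set \<Rightarrow> 'a \<Rightarrow> real" where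
  "exp_load E U v = exp (2 * real (card (out_nbrs E v \<inter> U)))"

definition potential :: "'a set \<Rightarrow> ('a \<times> 'a) set \<Rightarrow> 'a set \<Rightarrow> real" where
  "potential V E U = sum (exp_load E U) V"

lemma exp_load_insert:
  assumes "finite U" "w \<notin> U"
  shows "exp_load E (insert w U) v = exp_load E U v + (exp 2 - 1) * (if (v, w) \<in> E then exp_load E U v else 0)"
proof (cases "(v, w) \<in> E")
  case True
  then have "card (out_nbrs E v \<inter> insert w U) = Suc (card (out_nbrs E v \<inter> U))"
    using assms by (simp add: out_nbrs_def)
  then have "exp_load E (insert w U) v = exp_load E U v * exp 2"
    by (simp add: exp_load_def distrib_left exp_add)
  then show ?thesis using True by (simp add: algebra_simps)
next
  case False
  then have "out_nbrs E v \<inter> insert w U = out_nbrs E v \<inter> U"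
    by (auto simp: out_nbrs_def)
  then show ?thesis using False by (simp add: exp_load_def)
qed

lemma potential_insert:
  assumes "finite U" "w \<notin> U"
  shows "potential V E (insert w U) = potential V E U + (exp 2 - 1) * in_weight V E (exp_load E U) w"
proof -
  have "potential V E (insert w U)
      = (\<Sum>v\<in>V. exp_load E U v + (exp 2 - 1) * (if (v, w) \<in> E then exp_load E U v else 0))"
    unfolding potential_def using exp_load_insert[OF assms] by (intro sum.cong) auto
  then show ?thesis
    by (simp add: potential_def in_weight_def sum.distrib sum_distrib_left)
qed

lemma potential_nonneg: "potential V E U \<ge> 0"
  unfolding potential_def exp_load_def by (simp add: sum_nonneg)

lemma potential_insert_le:
  assumes "finite U" "w \<notin> U" "\<rho> > 0"
    and light: "in_weight V E (exp_load E U) w \<le> potential V E U / \<rho>"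
  shows "potential V E (insert w U) \<le> potential V E U * exp ((exp 2 - 1) / \<rho>)"
proof -
  have "potential V E (insert w U) \<le> potential V E U + (exp 2 - 1) * (potential V E U / \<rho>)"
    unfolding potential_insert[OF assms(1,2)] using light by (intro add_left_mono mult_left_mono) auto
  also have "\<dots> = potential V E U * (1 + (exp 2 - 1) / \<rho>)"
    by (simp add: algebra_simps)
  also have "\<dots> \<le> potential V E U * exp ((exp 2 - 1) / \<rho>)"
    using potential_nonneg by (intro mult_left_mono) (auto simp: add.commute intro: exp_ge_add_one_self)
  finally show ?thesis .
qed

lemma greedy_low_potential:
  assumes finV: "finite V" and "W \<subseteq> V" "\<rho> > 0"
  shows "\<exists>U\<subseteq>W. card U \<le> s
    \<and> potential V E U \<le> real (card V) * exp ((exp 2 - 1) * real (card U) / \<rho>)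
    \<and> (card U = s \<or> (\<forall>w\<in>W - U. potential V E U / \<rho> < in_weight V E (exp_load E U) w))"
proof (induction s)
  case 0
  have "potential V E {} = real (card V)" by (simp add: potential_def exp_load_def)
  then show ?case by auto
next
  case (Suc s)
  then obtain U where U: "U \<subseteq> W" "card U \<le> s"
    and bound: "potential V E U \<le> real (card V) * exp ((exp 2 - 1) * real (card U) / \<rho>)"
    and stop: "card U = s \<or> (\<forall>w\<in>W - U. potential V E U / \<rho> < in_weight V E (exp_load E U) w)"
    by blast
  show ?case
  proof (cases "\<forall>w\<in>W - U. potential V E U / \<rho> < in_weight V E (exp_load E U) w")
    case True
    then show ?thesis using U bound by auto
  next
    case False
    then obtain w where w: "w \<in> W" "w \<notin> U" "in_weight V E (exp_load E U) w \<le> potential V E U / \<rho>"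
      by (auto simp: not_less)
    have "finite U" using U(1) \<open>W \<subseteq> V\<close> finV by (meson finite_subset)
    have "potential V E (insert w U) \<le> potential V E U * exp ((exp 2 - 1) / \<rho>)"
      using potential_insert_le[OF \<open>finite U\<close> w(2) \<open>\<rho> > 0\<close> w(3)] .
    also have "\<dots> \<le> real (card V) * exp ((exp 2 - 1) * real (card U) / \<rho>) * exp ((exp 2 - 1) / \<rho>)"
      using bound by (intro mult_right_mono) auto
    also have "\<dots> = real (card V) * exp ((exp 2 - 1) * real (card (insert w U)) / \<rho>)"
      using \<open>finite U\<close> w(2) by (simp add: mult.assoc add_divide_distrib distrib_left flip: exp_add)
    finally show ?thesis
      using U w(1,2) stop False \<open>finite U\<close> by (intro exI[of _ "insert w U"]) auto
  qed
qed

lemma card_out_nbrs_le_of_potential_le: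
  assumes "finite V" "v \<in> V" "potential V E U \<le> exp (2 * L)"
  shows "real (card (out_nbrs E v \<inter> U)) \<le> L"
proof -
  have "exp_load E U v \<le> potential V E U"
    unfolding potential_def using assms(1,2) by (intro member_le_sum) (auto simp: exp_load_def)
  then have "exp (2 * real (card (out_nbrs E v \<inter> U))) \<le> exp (2 * L)"
    using assms(3) unfolding exp_load_def by linarith
  then show ?thesis by simp
qed

lemma min_dom_size_le_card_add:
  assumes "min_dom_size V E W k" "U \<subseteq> W" "finite U" "dominating_set V E (W - U) D"
  shows "k \<le> card U + card D"
proof -
  obtain D0 where D0: "dominating_set V E W D0" and min: "\<And>D'. dominating_set V E W D' \<Longrightarrow> k \<le> card D'"
    using assms(1) unfolding min_dom_size_def by blast
  obtain f where f: "\<And>w. w \<in> W \<Longrightarrow> f w \<in> D0 \<and> w \<in> out_nbrs E (f w)"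
    using D0 bchoice[of W "\<lambda>w d. d \<in> D0 \<and> w \<in> out_nbrs E d"] unfolding dominating_set_def by blast
  have "dominating_set V E W (f ` U \<union> D)"
    unfolding dominating_set_def
  proof (intro conjI ballI)
    show "f ` U \<union> D \<subseteq> V" using f D0 assms(2,4) by (auto simp: dominating_set_def)
  next
    fix w assume "w \<in> W"
    show "\<exists>d\<in>f ` U \<union> D. w \<in> out_nbrs E d"
    proof (cases "w \<in> U")
      case True
      then show ?thesis using f[OF \<open>w \<in> W\<close>] by blast
    next
      case False
      then show ?thesis using assms(4) \<open>w \<in> W\<close> by (auto simp: dominating_set_def)
    qed
  qed
  then have "k \<le> card (f ` U \<union> D)" by (rule min)
  also have "\<dots> \<le> card U + card D"
    using card_Un_le[of "f ` U" D] card_image_le[OF assms(3), of f] by linarith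
  finally show ?thesis .
qed

lemma stopped_greedy_card_bound:
  assumes finV: "finite V" and "W \<subseteq> V" "min_dom_size V E W k" "U \<subseteq> W"
    and "\<rho> > 0" "L \<ge> 0" and card_V: "real (card V) \<le> exp L"
    and stuck: "\<And>w. w \<in> W - U \<Longrightarrow> potential V E U / \<rho> < in_weight V E (exp_load E U) w"
  shows "real k \<le> real (card U) + 1 + \<rho> * L"
proof -
  have "finite U" "finite (W - U)" using assms(2,4) finV by (auto intro: finite_subset)
  have "\<exists>D. dominating_set V E (W - U) D \<and> real (card D) \<le> 1 + \<rho> * L"
  proof (cases "W = U")
    case True
    then show ?thesis using \<open>\<rho> > 0\<close> \<open>L \<ge> 0\<close> by (intro exI[of _ "{}"]) (auto simp: dominating_set_def)
  next
    case False
    then have "W - U \<noteq> {}" "V \<noteq> {}" using assms(2,4) by auto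
    then have "potential V E U > 0"
      unfolding potential_def exp_load_def using finV by (intro sum_pos) auto
    have "\<exists>D. dominating_set V E (W - U) D
        \<and> real (card D) \<le> 1 + sum (exp_load E U) V / (potential V E U / \<rho>) * ln (real (card (W - U)))"
      using finV \<open>finite (W - U)\<close> \<open>W - U \<noteq> {}\<close> stuck \<open>\<rho> > 0\<close> \<open>potential V E U > 0\<close>
      by (intro greedy_dominating_set) (auto simp: exp_load_def)
    then obtain D where D: "dominating_set V E (W - U) D"
      and card_D: "real (card D) \<le> 1 + \<rho> * ln (real (card (W - U)))"
      using \<open>potential V E U > 0\<close> \<open>\<rho> > 0\<close> by (auto simp: potential_def)
    have "card (W - U) \<le> card V"
      using finV assms(2) by (intro card_mono) auto
    then have "ln (real (card (W - U))) \<le> ln (exp L)"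
      using card_V \<open>W - U \<noteq> {}\<close> \<open>finite (W - U)\<close> by (intro ln_mono) (auto simp: card_gt_0_iff)
    then have "ln (real (card (W - U))) \<le> L" by simp
    then have "\<rho> * ln (real (card (W - U))) \<le> \<rho> * L"
      using \<open>\<rho> > 0\<close> by (intro mult_left_mono) auto
    then have "real (card D) \<le> 1 + \<rho> * L"
      using card_D by linarith
    with D show ?thesis by blast
  qed
  then obtain D where D: "dominating_set V E (W - U) D" and card_D: "real (card D) \<le> 1 + \<rho> * L"
    by blast
  have "real k \<le> real (card U + card D)"
    using min_dom_size_le_card_add[OF assms(3,4) \<open>finite U\<close> D] by (rule of_nat_mono)
  with card_D show ?thesis by simp
qed

lemma exp_2_le_9: "exp (2 :: real) \<le> 9"
proof -
  have "exp (2 :: real) = exp 1 * exp 1" by (simp flip: exp_add)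
  also have "\<dots> \<le> 3 * 3" using exp_le by (intro mult_mono) auto
  finally show ?thesis by simp
qed

lemma large_subset_with_small_loads:
  assumes finV: "finite V" and WV: "W \<subseteq> V" and dom: "min_dom_size V E W k"
    and "k > 0" "L > 0" and card_V: "real (card V) \<le> exp L"
  shows "\<exists>U\<subseteq>W. real k \<le> 10 * real (card U) + 9 \<and> (\<forall>v\<in>V. real (card (out_nbrs E v \<inter> U)) \<le> L)"
proof -
  define \<rho> where "\<rho> = 6 * real k / (7 * L)"
  have "\<rho> > 0" "\<rho> * L = 6 * real k / 7"
    using \<open>k > 0\<close> \<open>L > 0\<close> by (simp_all add: \<rho>_def)
  obtain U where U: "U \<subseteq> W" "card U \<le> k div 10"
    and pot: "potential V E U \<le> real (card V) * exp ((exp 2 - 1) * real (card U) / \<rho>)"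
    and stop: "card U = k div 10 \<or> (\<forall>w\<in>W - U. potential V E U / \<rho> < in_weight V E (exp_load E U) w)"
    using greedy_low_potential[OF finV WV \<open>\<rho> > 0\<close>] by blast
  have "10 * card U \<le> k" using U(2) by linarith
  then have "(exp 2 - 1) * real (card U) \<le> 8 * (real k / 10)"
    using exp_2_le_9 by (intro mult_mono) auto
  also have "\<dots> \<le> \<rho> * L" using \<open>\<rho> * L = 6 * real k / 7\<close> by simp
  finally have "(exp 2 - 1) * real (card U) / \<rho> \<le> L"
    using \<open>\<rho> > 0\<close> by (simp add: divide_le_eq mult.commute)
  then have "potential V E U \<le> exp L * exp L"
    using card_V by (intro order_trans[OF pot] mult_mono) auto
  then have "potential V E U \<le> exp (2 * L)" by (simp flip: exp_add)
  then have loads: "\<forall>v\<in>V. real (card (out_nbrs E v \<inter> U)) \<le> L"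
    using card_out_nbrs_le_of_potential_le[OF finV] by blast
  have "real k \<le> 10 * real (card U) + 9"
    using stop
  proof
    assume "card U = k div 10"
    moreover have "k \<le> 10 * (k div 10) + 9"
      using div_mult_mod_eq[of k 10] mod_less_divisor[of 10 k] by linarith
    ultimately show ?thesis by linarith
  next
    assume "\<forall>w\<in>W - U. potential V E U / \<rho> < in_weight V E (exp_load E U) w"
    then have "real k \<le> real (card U) + 1 + \<rho> * L"
      using stopped_greedy_card_bound[OF finV WV dom U(1) \<open>\<rho> > 0\<close> _ card_V] \<open>L > 0\<close> by auto
    then show ?thesis using \<open>\<rho> * L = 6 * real k / 7\<close> by linarith
  qed
  with U(1) loads show ?thesis by blast
qed

lemma large_domination_number_arith:
  fixes k L u :: real
  assumes "1 \<le> L" "23 \<le> k" "k - 9 \<le> 10 * ((2 * L + 1) * u)"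
  shows "1 / 50 * k / L \<le> u"
proof -
  have "0 \<le> (L - 1) * (3 * k - 45)" using assms(1,2) by (intro mult_nonneg_nonneg) auto
  moreover have "(L - 1) * (3 * k - 45) = 3 * (L * k) - 45 * L - 3 * k + 45"
    by (simp add: algebra_simps)
  moreover have "k * (10 * (2 * L + 1)) = 20 * (L * k) + 10 * k"
    by (simp add: algebra_simps)
  moreover have "50 * L * (k - 9) = 50 * (L * k) - 450 * L"
    by (simp add: algebra_simps)
  ultimately have "k * (10 * (2 * L + 1)) \<le> 50 * L * (k - 9)"
    using assms(2) by linarith
  also have "\<dots> \<le> 50 * L * (10 * ((2 * L + 1) * u))"
    using assms(1,3) by (intro mult_left_mono) auto
  also have "\<dots> = (50 * L * u) * (10 * (2 * L + 1))"
    by (simp add: algebra_simps)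
  finally have "k \<le> 50 * L * u"
    by (rule mult_right_le_imp_le) (use assms(1) in auto)
  then show ?thesis
    using assms(1) by (simp add: pos_divide_le_eq mult.commute)
qed

lemma min_dom_size_empty:
  assumes "min_dom_size V E {} k"
  shows "k = 0"
proof -
  have min: "\<And>D. dominating_set V E {} D \<Longrightarrow> k \<le> card D"
    using assms by (simp add: min_dom_size_def)
  have "k \<le> card ({} :: 'a set)" by (rule min) (simp add: dominating_set_def)
  then show ?thesis by simp
qed

lemma small_domination_number_case:
  assumes "min_dom_size V E W k" "1 \<le> L" "real k \<le> 50 * L"
  shows "\<exists>U\<subseteq>W. independent_set E U \<and> 1 / 50 * real k / L \<le> real (card U)
    \<and> (\<forall>v\<in>V. real (card (out_nbrs E v \<inter> U)) \<le> L)"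
proof (cases "k = 0")
  case True
  then show ?thesis using assms(2) by (intro exI[of _ "{}"]) (simp add: independent_set_def)
next
  case False
  have "W \<noteq> {}"
  proof
    assume "W = {}"
    with assms(1) have "k = 0" by (simp add: min_dom_size_empty)
    with False show False ..
  qed
  then obtain w where "w \<in> W" by blast
  have "real (card (out_nbrs E v \<inter> {w})) \<le> L" for v
  proof -
    have "card (out_nbrs E v \<inter> {w}) \<le> card {w}" by (rule card_mono) auto
    then have "real (card (out_nbrs E v \<inter> {w})) \<le> 1" by simp
    then show ?thesis using assms(2) by linarith
  qed
  moreover have "1 / 50 * real k / L \<le> 1"
    unfolding pos_divide_le_eq[OF order.strict_trans2[OF zero_less_one assms(2)]]
    using assms(3) by linarith
  ultimately show ?thesis
    using \<open>w \<in> W\<close> by (intro exI[of _ "{w}"]) (simp add: independent_set_def)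
qed

lemma large_domination_number_case:
  assumes finV: "finite V" and WV: "W \<subseteq> V" and dom: "min_dom_size V E W k"
    and "1 \<le> L" "23 \<le> k" and card_V: "real (card V) \<le> exp L"
  shows "\<exists>U\<subseteq>W. independent_set E U \<and> 1 / 50 * real k / L \<le> real (card U)
    \<and> (\<forall>v\<in>V. real (card (out_nbrs E v \<inter> U)) \<le> L)"
proof -
  obtain U0 where U0: "U0 \<subseteq> W" "real k \<le> 10 * real (card U0) + 9"
    and loads: "\<forall>v\<in>V. real (card (out_nbrs E v \<inter> U0)) \<le> L"
    using large_subset_with_small_loads[OF finV WV dom _ _ card_V] \<open>1 \<le> L\<close> \<open>23 \<le> k\<close> by auto
  have "finite U0" using U0(1) WV finV by (meson finite_subset)
  have "card {x\<in>U0. x \<noteq> u \<and> (u, x) \<in> E} \<le> card (out_nbrs E u \<inter> U0)" for u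
    using \<open>finite U0\<close> by (intro card_mono) (auto simp: out_nbrs_def)
  moreover have "real (card (out_nbrs E u \<inter> U0)) \<le> L" if "u \<in> U0" for u
    using loads that U0(1) WV by blast
  ultimately have "real (card {x\<in>U0. x \<noteq> u \<and> (u, x) \<in> E}) \<le> L" if "u \<in> U0" for u
    using that by (meson of_nat_le_iff order_trans)
  then obtain U where U: "U \<subseteq> U0" "independent_set E U"
    and card_U: "real (card U0) \<le> (2 * L + 1) * real (card U)"
    using independent_subset_of_bounded_out_degree[OF \<open>finite U0\<close>] by blast
  have "1 / 50 * real k / L \<le> real (card U)"
    using U0(2) card_U \<open>1 \<le> L\<close> \<open>23 \<le> k\<close> by (intro large_domination_number_arith) linarith+
  moreover have "real (card (out_nbrs E v \<inter> U)) \<le> L" if "v \<in> V" for v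
  proof -
    have "card (out_nbrs E v \<inter> U) \<le> card (out_nbrs E v \<inter> U0)"
      using \<open>finite U0\<close> U(1) by (intro card_mono) auto
    then show ?thesis using loads that by (meson of_nat_le_iff order_trans)
  qed
  ultimately show ?thesis using U U0(1) by blast
qed

theorem lemma8:
  fixes V :: "'a set" and E :: "('a \<times> 'a) set" and W :: "'a set" and n k :: nat
  assumes "finite V" and "E \<subseteq> V \<times> V" and "card V = n" and "n \<ge> 3"
    and "W \<subseteq> V" and "min_dom_size V E W k"
  shows "\<exists>U. U \<subseteq> W \<and> independent_set E U
           \<and> real (card U) \<ge> (1/50) * real k / ln (real n)
           \<and> (\<forall>v\<in>V. real (card (out_nbrs E v \<inter> U)) \<le> ln (real n))"
proof -
  have "exp 1 \<le> real n" using exp_le \<open>n \<ge> 3\<close> by linarith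
  then have "1 \<le> ln (real n)" using ln_ge_iff[of "real n" 1] \<open>n \<ge> 3\<close> by simp
  have card_V: "real (card V) \<le> exp (ln (real n))" using \<open>card V = n\<close> \<open>n \<ge> 3\<close> by simp
  have "\<exists>U\<subseteq>W. independent_set E U \<and> 1 / 50 * real k / ln (real n) \<le> real (card U)
      \<and> (\<forall>v\<in>V. real (card (out_nbrs E v \<inter> U)) \<le> ln (real n))"
  proof (cases "k \<le> 22")
    case True
    then show ?thesis using small_domination_number_case[OF assms(6) \<open>1 \<le> ln (real n)\<close>] \<open>1 \<le> ln (real n)\<close>
      by simp
  next
    case False
    then show ?thesis using large_domination_number_case[OF assms(1,5,6) \<open>1 \<le> ln (real n)\<close> _ card_V]
      by simp
  qed
  then show ?thesis by auto
qed

end
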